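(* Let $A$, $\tilde R$, $D$ and $R$ be real $n\times n$ matrices. If $A$ and $D$ are diagonal and $\tilde R$ is orthogonal, then $$\mathrm{Tr}\left[A R D\tilde R\right]\le \sum_j |d_j|\Big(\sum_i a_i^2 r_{ij}^2\Big)^{1/2},$$ where $a_j$ and $d_j$ are the diagonal entries of $A$ and $D$ respectively and $r_{ij}$ is the $(i,j)$ entry of $R$. *)

theory Defs
  imports "HOL-Analysis.Analysis"
begin

definition diagonal_matrix :: "'a::zero^'n^'n \<Rightarrow> bool" where
  "diagonal_matrix M \<longleftrightarrow> (\<forall>i j. i \<noteq> j \<longrightarrow> M $ i $ j = 0)"

end

theory Submission
  imports Defs
begin

text \<open>Since A and D are diagonal, the trace collapses to
  \<open>\<Sum>\<^sub>j d\<^sub>j \<Sum>\<^sub>i a\<^sub>i r\<^sub>i\<^sub>j \<tilde>r\<^sub>j\<^sub>i\<close>. The inner sum is the inner product of the vector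
  \<open>(a\<^sub>i r\<^sub>i\<^sub>j)\<^sub>i\<close> with the j-th row of the orthogonal matrix, a unit vector,
  so by Cauchy-Schwarz it is bounded in absolute value by the norm of the former.\<close>

lemma matrix_mul_diagonal_left:
  fixes A :: "'a::semiring_1^'n^'n" and B :: "'a^'m^'n"
  assumes "diagonal_matrix A"
  shows "(A ** B) $ i $ k = A $ i $ i * B $ i $ k"
proof -
  have "(A ** B) $ i $ k = (\<Sum>l\<in>UNIV. if l = i then A $ i $ i * B $ i $ k else 0)"
    unfolding matrix_matrix_mult_def vec_lambda_beta
    by (intro sum.cong refl) (use assms in \<open>auto simp: diagonal_matrix_def\<close>)
  then show ?thesis by simp
qed

lemma matrix_mul_diagonal_right:
  fixes D :: "'a::semiring_1^'n^'n" and B :: "'a^'n^'m"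
  assumes "diagonal_matrix D"
  shows "(B ** D) $ i $ k = B $ i $ k * D $ k $ k"
proof -
  have "(B ** D) $ i $ k = (\<Sum>l\<in>UNIV. if l = k then B $ i $ k * D $ k $ k else 0)"
    unfolding matrix_matrix_mult_def vec_lambda_beta
    by (intro sum.cong refl) (use assms in \<open>auto simp: diagonal_matrix_def\<close>)
  then show ?thesis by simp
qed

lemma trace_diagonal_mult_diagonal_mult:
  fixes A D R S :: "'a::comm_semiring_1^'n^'n"
  assumes "diagonal_matrix A" and "diagonal_matrix D"
  shows "trace (A ** R ** D ** S) = (\<Sum>j\<in>UNIV. D $ j $ j * (\<Sum>i\<in>UNIV. A $ i $ i * R $ i $ j * S $ j $ i))"
proof -
  have "trace (A ** R ** D ** S) = (\<Sum>i\<in>UNIV. \<Sum>j\<in>UNIV. (A ** R ** D) $ i $ j * S $ j $ i)"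
    by (simp add: trace_def matrix_matrix_mult_def)
  also have "\<dots> = (\<Sum>i\<in>UNIV. \<Sum>j\<in>UNIV. D $ j $ j * (A $ i $ i * R $ i $ j * S $ j $ i))"
    by (simp add: matrix_mul_diagonal_left[OF assms(1)] matrix_mul_diagonal_right[OF assms(2)] mult_ac)
  also have "\<dots> = (\<Sum>j\<in>UNIV. D $ j $ j * (\<Sum>i\<in>UNIV. A $ i $ i * R $ i $ j * S $ j $ i))"
    by (subst sum.swap) (simp add: sum_distrib_left)
  finally show ?thesis .
qed

lemma abs_sum_mult_orthogonal_row_le_norm:
  fixes Q :: "real^'n^'n" and x :: "real^'n"
  assumes "orthogonal_matrix Q"
  shows "\<bar>\<Sum>i\<in>UNIV. x $ i * Q $ j $ i\<bar> \<le> norm x"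
proof -
  have "norm (row j Q) = 1"
    using assms unfolding orthogonal_matrix_orthonormal_rows by blast
  moreover have "\<bar>x \<bullet> row j Q\<bar> \<le> norm x * norm (row j Q)"
    by (rule Cauchy_Schwarz_ineq2)
  ultimately show ?thesis
    by (simp add: inner_vec_def row_def)
qed

lemma norm_vec_eq_sqrt_sum_squares:
  fixes x :: "real^'n"
  shows "norm x = sqrt (\<Sum>i\<in>UNIV. (x $ i)^2)"
  by (simp add: norm_eq_sqrt_inner inner_vec_def power2_eq_square)

theorem lemma3:
  fixes A Rt D R :: "real^'n^'n"
  assumes "diagonal_matrix A" and "diagonal_matrix D" and "orthogonal_matrix Rt"
  shows "trace (A ** R ** D ** Rt)
    \<le> (\<Sum>j\<in>UNIV. \<bar>D $ j $ j\<bar> * sqrt (\<Sum>i\<in>UNIV. (A $ i $ i)^2 * (R $ i $ j)^2))"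
proof -
  have column_bound: "D $ j $ j * (\<Sum>i\<in>UNIV. A $ i $ i * R $ i $ j * Rt $ j $ i)
      \<le> \<bar>D $ j $ j\<bar> * sqrt (\<Sum>i\<in>UNIV. (A $ i $ i)^2 * (R $ i $ j)^2)" for j
  proof -
    let ?x = "\<chi> i. A $ i $ i * R $ i $ j"
    have "\<bar>\<Sum>i\<in>UNIV. A $ i $ i * R $ i $ j * Rt $ j $ i\<bar> \<le> norm ?x"
      using abs_sum_mult_orthogonal_row_le_norm[OF assms(3), of ?x j] by simp
    also have "\<dots> = sqrt (\<Sum>i\<in>UNIV. (A $ i $ i)^2 * (R $ i $ j)^2)"
      by (simp add: norm_vec_eq_sqrt_sum_squares power_mult_distrib)
    finally have "\<bar>D $ j $ j * (\<Sum>i\<in>UNIV. A $ i $ i * R $ i $ j * Rt $ j $ i)\<bar>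
        \<le> \<bar>D $ j $ j\<bar> * sqrt (\<Sum>i\<in>UNIV. (A $ i $ i)^2 * (R $ i $ j)^2)"
      unfolding abs_mult by (rule mult_left_mono) simp
    then show ?thesis by linarith
  qed
  show ?thesis
    unfolding trace_diagonal_mult_diagonal_mult[OF assms(1,2)]
    by (rule sum_mono) (rule column_bound)
qed

end
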